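(* Let $\rho$ be a density matrix on $\mathcal F$ (positive, trace one) that commutes with the particle number operator $\hat{\mathbb N}=\sum_{i=1}^n c_i^*c_i$, where $c_i=c(\varphi_i)$. Define the numbers $\gamma_{ij}\doteq\operatorname{tr}(\rho\,c_j^*c_i)$ for $i,j\in\mathbb N_n$, and put $\operatorname{tr}\gamma=\sum_i\gamma_{ii}$ and $d\Gamma(\gamma)=\sum_{i,j}\gamma_{ij}c_i^*c_j$. Let $\pi_1$ be the orthogonal projection in $\mathcal L^2(\mathcal F)$ onto $\mathcal O_1$. Then $$2^n\pi_1(\rho)=(n+1-2\operatorname{tr}\gamma)\mathbb 1-2\hat{\mathbb N}+4\,d\Gamma(\gamma).$$
   Context: Let $\mathfrak h$ be a complex Hilbert space of finite dimension $n$ with orthonormal basis $\varphi_1,\dots,\varphi_n$, and $\mathbb N_n=\{1,\dots,n\}$. $\mathcal F=\bigoplus_{k=0}^n\bigwedge^k\mathfrak h$ is the fermion Fock space with the determinant inner product. The creation operators are $c^*(f)\omega=f\wedge\omega$, and $c(f)=c^*(f)^*$. $\mathcal L^2(\mathcal F)$ is the space of all linear operators on $\mathcal F$ with inner product $\langle a,b\rangle=\operatorname{tr}(a^*b)$. For $\omega\in\mathcal F$ let $\mathbf c^*(\omega)\xi=\omega\wedge\xi$ and $\mathbf c(\omega)=\mathbf c^*(\omega)^*$. The space $\mathcal O_1$ of one-body operators is the linear span of the operators $\mathbf c^*(\omega)\mathbf c(\eta)$ with $\omega\in\bigwedge^r\mathfrak h$, $\eta\in\bigwedge^s\mathfrak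 h$ and $r+s\in\{0,2\}$. Equivalently, it is the span of $\mathbb 1$, $c_i^*c_j$, $c_i^*c_j^*$ and $c_ic_j$ for $i,j\in\mathbb N_n$. *)

theory Defs
  imports Complex_Main
begin

text \<open>Concrete model of the fermion Fock space over h = C^n with orthonormal basis
  phi_1..phi_n.  The Fock space F has orthonormal basis e_S, S \<subseteq> {1..n}, where
  e_S = phi_{s1} \<and> ... \<and> phi_{sk} with s1 < ... < sk.  A linear operator A on F is
  represented by its matrix entries A S T = <e_S, A e_T> (zero outside Pow {1..n}).\<close>

type_synonym fop = "nat set \<Rightarrow> nat set \<Rightarrow> complex"

definition fock_op :: "nat \<Rightarrow> fop \<Rightarrow> bool" where
  "fock_op n A \<longleftrightarrow> (\<forall>S T. A S T \<noteq> 0 \<longrightarrow> S \<subseteq> {1..n} \<and> T \<subseteq> {1..n})"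

definition fmult :: "nat \<Rightarrow> fop \<Rightarrow> fop \<Rightarrow> fop" where
  "fmult n A B = (\<lambda>S T. \<Sum>U\<in>Pow {1..n}. A S U * B U T)"

definition fadj :: "fop \<Rightarrow> fop" where
  "fadj A = (\<lambda>S T. cnj (A T S))"

definition ftr :: "nat \<Rightarrow> fop \<Rightarrow> complex" where
  "ftr n A = (\<Sum>S\<in>Pow {1..n}. A S S)"

definition hs_inner :: "nat \<Rightarrow> fop \<Rightarrow> fop \<Rightarrow> complex" where
  "hs_inner n A B = ftr n (fmult n (fadj A) B)"

definition fid :: "nat \<Rightarrow> fop" where
  "fid n = (\<lambda>S T. if S = T \<and> S \<subseteq> {1..n} then 1 else 0)"

text \<open>Creation operator c_i^* = c^*(phi_i): c_i^* e_T = phi_i \<and> e_T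
  = (-1)^{#{j \<in> T. j < i}} e_{T \<union> {i}} if i \<notin> T, and 0 otherwise.\<close>
definition cre :: "nat \<Rightarrow> nat \<Rightarrow> fop" where
  "cre n i = (\<lambda>S T. if T \<subseteq> {1..n} \<and> i \<in> {1..n} \<and> i \<notin> T \<and> S = insert i T
                    then (-1) ^ card {j\<in>T. j < i} else 0)"

definition ann :: "nat \<Rightarrow> nat \<Rightarrow> fop" where
  "ann n i = fadj (cre n i)"

definition numop :: "nat \<Rightarrow> fop" where
  "numop n = (\<lambda>S T. \<Sum>i\<in>{1..n}. fmult n (cre n i) (ann n i) S T)"

definition O1 :: "nat \<Rightarrow> fop set" where
  "O1 n = {(\<lambda>S T. a * fid n S T
             + (\<Sum>i\<in>{1..n}. \<Sum>j\<in>{1..n}. b i j * fmult n (cre n i) (ann n j) S T)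
             + (\<Sum>i\<in>{1..n}. \<Sum>j\<in>{1..n}. d i j * fmult n (cre n i) (cre n j) S T)
             + (\<Sum>i\<in>{1..n}. \<Sum>j\<in>{1..n}. e i j * fmult n (ann n i) (ann n j) S T))
          | a b d e. True}"

definition orth_proj :: "nat \<Rightarrow> fop set \<Rightarrow> fop \<Rightarrow> fop" where
  "orth_proj n V x = (THE p. p \<in> V \<and> (\<forall>y\<in>V. hs_inner n y (\<lambda>S T. x S T - p S T) = 0))"

definition density_matrix :: "nat \<Rightarrow> fop \<Rightarrow> bool" where
  "density_matrix n \<rho> \<longleftrightarrow> fock_op n \<rho> \<and>
     (\<forall>v :: nat set \<Rightarrow> complex.
        (\<Sum>S\<in>Pow {1..n}. \<Sum>T\<in>Pow {1..n}. cnj (v S) * \<rho> S T * v T) \<in> \<real> \<and>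
        0 \<le> Re (\<Sum>S\<in>Pow {1..n}. \<Sum>T\<in>Pow {1..n}. cnj (v S) * \<rho> S T * v T)) \<and>
     ftr n \<rho> = 1"

end

theory Submission
  imports Defs
begin

(*
  The orthogonal projection onto O1 is determined by orthogonality of the residual to the
  generators 1, c_i^* c_j, c_i^* c_j^* and c_i c_j.  The candidate
  2^-n ((n + 1 - 2 tr gamma) 1 - 2 N + 4 dGamma(gamma)) lies in O1 and, like rho, commutes
  with N; so the residual is orthogonal to the pair terms, which change the particle number by
  two.  What remains involves only the Gram matrix of 1 and the c_i^* c_j in the basis e_S,
  whose entries count subsets of {1..n} with prescribed intersection with {i, k}:
  <1, 1> = 2^n, <1, c_k^* c_k> = 2^(n-1), <c_i^* c_i, c_k^* c_k> = 2^(n-2) (1 + delta_ik), and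
  <c_i^* c_j, c_k^* c_l> = 2^(n-2) delta_ik delta_jl for i ~= j.  Matching these against
  <1, rho> = tr rho = 1 and <c_i^* c_j, rho> = gamma_ij yields the formula.
*)

section \<open>Counting subsets\<close>

lemma sum_sum_if_eq:
  fixes f :: "'a \<Rightarrow> 'a \<Rightarrow> 'b::semiring_0"
  assumes "finite I"
  shows "(\<Sum>k\<in>I. \<Sum>l\<in>I. f k l * (if k = l then g k else 0)) = (\<Sum>k\<in>I. f k k * g k)"
proof (rule sum.cong)
  fix k assume "k \<in> I"
  have "(\<Sum>l\<in>I. f k l * (if k = l then g k else 0)) = (\<Sum>l\<in>I. if k = l then f k k * g k else 0)"
    by (rule sum.cong) auto
  with assms \<open>k \<in> I\<close> show "(\<Sum>l\<in>I. f k l * (if k = l then g k else 0)) = f k k * g k"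
    by simp
qed simp

lemma sum_sum_if_eq_pair:
  fixes f :: "'a \<Rightarrow> 'b \<Rightarrow> 'c::semiring_0"
  assumes "finite I" and "finite J" and "i \<in> I" and "j \<in> J"
  shows "(\<Sum>k\<in>I. \<Sum>l\<in>J. f k l * (if k = i \<and> l = j then c else 0)) = f i j * c"
proof -
  have "(\<Sum>l\<in>J. f k l * (if k = i \<and> l = j then c else 0)) = (if k = i then f i j * c else 0)" for k
  proof -
    have "(\<Sum>l\<in>J. f k l * (if k = i \<and> l = j then c else 0))
        = (\<Sum>l\<in>J. if l = j then (if k = i then f i j * c else 0) else 0)"
      by (rule sum.cong) auto
    with assms(2,4) show ?thesis
      by simp
  qed
  with assms(1,3) show ?thesis
    by simp
qed

lemma card_Pow_Int_eq_mult_pow: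
  assumes "finite A" and "B \<subseteq> A" and "C \<subseteq> B"
  shows "card {S \<in> Pow A. S \<inter> B = C} * 2 ^ card B = 2 ^ card A"
proof -
  have "{S \<in> Pow A. S \<inter> B = C} = (\<union>) C ` Pow (A - B)"
  proof (intro equalityI subsetI)
    fix S assume "S \<in> {S \<in> Pow A. S \<inter> B = C}"
    then have "S = C \<union> (S - B)" and "S - B \<in> Pow (A - B)"
      by auto
    then show "S \<in> (\<union>) C ` Pow (A - B)"
      by blast
  qed (use assms in auto)
  moreover have "inj_on ((\<union>) C) (Pow (A - B))"
    using assms(3) by (auto intro!: inj_onI)
  ultimately have "card {S \<in> Pow A. S \<inter> B = C} = 2 ^ card (A - B)"
    using assms(1) by (simp add: card_image card_Pow)
  moreover have "card (A - B) + card B = card A"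
    using assms(1,2) by (metis card_Diff_subset card_mono finite_subset le_add_diff_inverse2)
  ultimately show ?thesis
    by (metis power_add)
qed

lemma card_Pow_member:
  assumes "i \<in> {1..n}"
  shows "2 * card {S \<in> Pow {1..n}. i \<in> S} = 2 ^ n"
proof -
  have "{S \<in> Pow {1..n}. i \<in> S} = {S \<in> Pow {1..n}. S \<inter> {i} = {i}}"
    by auto
  then show ?thesis
    using card_Pow_Int_eq_mult_pow[of "{1..n}" "{i}" "{i}"] assms by simp
qed

lemma card_Pow_member_nonmember:
  assumes "i \<in> {1..n}" and "j \<in> {1..n}" and "i \<noteq> j"
  shows "4 * card {S \<in> Pow {1..n}. i \<in> S \<and> j \<notin> S} = 2 ^ n"
proof -
  have "{S \<in> Pow {1..n}. i \<in> S \<and> j \<notin> S} = {S \<in> Pow {1..n}. S \<inter> {i, j} = {i}}"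
    using assms(3) by auto
  then show ?thesis
    using card_Pow_Int_eq_mult_pow[of "{1..n}" "{i, j}" "{i}"] assms by (simp add: mult.commute)
qed

lemma card_Pow_two_members:
  assumes "i \<in> {1..n}" and "j \<in> {1..n}" and "i \<noteq> j"
  shows "4 * card {S \<in> Pow {1..n}. i \<in> S \<and> j \<in> S} = 2 ^ n"
proof -
  have "{S \<in> Pow {1..n}. i \<in> S \<and> j \<in> S} = {S \<in> Pow {1..n}. S \<inter> {i, j} = {i, j}}"
    by auto
  then show ?thesis
    using card_Pow_Int_eq_mult_pow[of "{1..n}" "{i, j}" "{i, j}"] assms by (simp add: mult.commute)
qed

lemma of_nat_card_Pow_member:
  assumes "i \<in> {1..n}"
  shows "of_nat (card {S \<in> Pow {1..n}. i \<in> S}) = (2 ^ n / 2 :: complex)"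
  using arg_cong[OF card_Pow_member[OF assms], of "of_nat :: nat \<Rightarrow> complex"] by (simp add: field_simps)

lemma sum_mult_card_Pow_member:
  fixes f :: "nat \<Rightarrow> complex"
  shows "(\<Sum>k\<in>{1..n}. f k * of_nat (card {S \<in> Pow {1..n}. k \<in> S})) = (\<Sum>k\<in>{1..n}. f k) * 2 ^ n / 2"
  unfolding sum_distrib_right sum_divide_distrib
  by (intro sum.cong refl) (simp only: of_nat_card_Pow_member times_divide_eq_right)

lemma sum_mult_card_Pow_two_members:
  fixes f :: "nat \<Rightarrow> complex"
  assumes "i \<in> {1..n}"
  shows "(\<Sum>k\<in>{1..n}. f k * of_nat (card {S \<in> Pow {1..n}. i \<in> S \<and> k \<in> S}))
     = ((\<Sum>k\<in>{1..n}. f k) + f i) * 2 ^ n / 4"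
proof -
  have count: "of_nat (card {S \<in> Pow {1..n}. i \<in> S \<and> k \<in> S})
      = (2 ^ n / 4 + (if k = i then 2 ^ n / 4 else 0) :: complex)" if "k \<in> {1..n}" for k
  proof (cases "k = i")
    case True
    then show ?thesis
      using of_nat_card_Pow_member[OF assms] by simp
  next
    case False
    then show ?thesis
      using arg_cong[OF card_Pow_two_members[OF assms that], of "of_nat :: nat \<Rightarrow> complex"]
      by (simp add: field_simps)
  qed
  have "(\<Sum>k\<in>{1..n}. f k * of_nat (card {S \<in> Pow {1..n}. i \<in> S \<and> k \<in> S}))
      = (\<Sum>k\<in>{1..n}. f k * (2 ^ n / 4) + (if k = i then f i * (2 ^ n / 4) else 0))"
    by (intro sum.cong refl) (simp only: count, simp add: distrib_left)
  also have "\<dots> = (\<Sum>k\<in>{1..n}. f k) * (2 ^ n / 4) + f i * (2 ^ n / 4)"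
    using assms by (simp only: sum.distrib sum_distrib_right[symmetric] sum.delta finite_atLeastAtMost if_True)
  also have "\<dots> = ((\<Sum>k\<in>{1..n}. f k) + f i) * 2 ^ n / 4"
    by (simp add: algebra_simps)
  finally show ?thesis .
qed

section \<open>Matrix entries of creation and annihilation operators\<close>

abbreviation cre_ann :: "nat \<Rightarrow> nat \<Rightarrow> nat \<Rightarrow> fop" where
  "cre_ann n i j \<equiv> fmult n (cre n i) (ann n j)"

lemma cre_neq_zeroD:
  "cre n i S T \<noteq> 0 \<Longrightarrow> T \<subseteq> {1..n} \<and> i \<in> {1..n} \<and> i \<notin> T \<and> S = insert i T"
  by (simp add: cre_def split: if_splits)

lemma ann_neq_zeroD:
  "ann n i S T \<noteq> 0 \<Longrightarrow> S \<subseteq> {1..n} \<and> i \<in> {1..n} \<and> i \<notin> S \<and> T = insert i S"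
  by (simp add: ann_def fadj_def cre_def split: if_splits)

lemma cre_ann_entry:
  "cre_ann n i j S T =
    (if S \<subseteq> {1..n} \<and> T \<subseteq> {1..n} \<and> i \<in> S \<and> j \<in> T \<and> S - {i} = T - {j}
     then (-1) ^ (card {x\<in>S-{i}. x<i} + card {x\<in>S-{i}. x<j}) else 0)"
proof -
  have "cre_ann n i j S T = (\<Sum>U\<in>Pow {1..n}. cre n i S U * cnj (cre n j T U))"
    by (simp add: fmult_def ann_def fadj_def)
  also have "\<dots> = (\<Sum>U\<in>Pow {1..n}. if U = S - {i} then cre n i S U * cnj (cre n j T U) else 0)"
    by (rule sum.cong) (auto dest: cre_neq_zeroD)
  also have "\<dots> = (if S - {i} \<in> Pow {1..n} then cre n i S (S - {i}) * cnj (cre n j T (S - {i})) else 0)"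
    by (simp add: sum.delta')
  also have "\<dots> = (if S \<subseteq> {1..n} \<and> T \<subseteq> {1..n} \<and> i \<in> S \<and> j \<in> T \<and> S - {i} = T - {j}
     then (-1) ^ (card {x\<in>S-{i}. x<i} + card {x\<in>S-{i}. x<j}) else 0)"
    by (auto simp: cre_def power_add)
  finally show ?thesis .
qed

lemma cre_ann_neq_zeroD:
  "cre_ann n i j S T \<noteq> 0 \<Longrightarrow>
     S \<subseteq> {1..n} \<and> T \<subseteq> {1..n} \<and> i \<in> S \<and> j \<in> T \<and> S - {i} = T - {j}"
  by (simp add: cre_ann_entry split: if_splits)

lemma cnj_cre_ann [simp]: "cnj (cre_ann n i j S T) = cre_ann n i j S T"
  by (simp add: cre_ann_entry)

lemma cre_ann_diag:
  "cre_ann n i j S S = (if i = j \<and> S \<subseteq> {1..n} \<and> i \<in> S then 1 else 0)"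
proof -
  have "(-1::complex) ^ (k + k) = 1" for k
    by (simp flip: mult_2 add: power_mult)
  then show ?thesis
    by (auto simp: cre_ann_entry)
qed

lemma cre_ann_card:
  assumes "cre_ann n i j S T \<noteq> 0"
  shows "card S = card T"
proof -
  from cre_ann_neq_zeroD[OF assms]
  have h: "finite S" "finite T" "i \<in> S" "j \<in> T" "S - {i} = T - {j}"
    by (auto intro: finite_subset)
  have "card S = Suc (card (S - {i}))" "card T = Suc (card (T - {j}))"
    using card.remove[OF h(1,3)] card.remove[OF h(2,4)] by simp_all
  then show ?thesis
    using h(5) by simp
qed

lemma numop_entry: "numop n S T = (if S = T \<and> S \<subseteq> {1..n} then of_nat (card S) else 0)"
proof (cases "S = T \<and> S \<subseteq> {1..n}")
  case True
  then have "numop n S T = (\<Sum>i\<in>{1..n}. if i \<in> S then 1 else 0)"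
    by (auto simp: numop_def cre_ann_diag intro!: sum.cong)
  also have "\<dots> = of_nat (card ({1..n} \<inter> S))"
    by (simp add: sum.If_cases)
  also have "{1..n} \<inter> S = S"
    using True by auto
  finally show ?thesis
    by (simp only: if_P[OF True])
next
  case False
  then have "cre_ann n i i S T = 0" for i
    by (blast dest: cre_ann_neq_zeroD)
  with False show ?thesis
    by (auto simp: numop_def)
qed

lemma cre_ann_swap: "cre_ann n j i T S = cre_ann n i j S T"
proof -
  have "cre_ann n j i T S = cnj (cre_ann n i j S T)"
    by (simp add: fmult_def ann_def fadj_def mult.commute)
  then show ?thesis
    by simp
qed

lemma cre_cre_neq_zeroD:
  assumes "fmult n (cre n i) (cre n j) S T \<noteq> 0"
  shows "S \<subseteq> {1..n} \<and> T \<subseteq> {1..n} \<and> card S = card T + 2"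
proof -
  from assms obtain U where "cre n i S U \<noteq> 0" and "cre n j U T \<noteq> 0"
    unfolding fmult_def by (rule sum.not_neutral_contains_not_neutral) auto
  from cre_neq_zeroD[OF this(1)] cre_neq_zeroD[OF this(2)]
  have "T \<subseteq> {1..n}" "i \<in> {1..n}" "j \<in> {1..n}" "j \<notin> T" "i \<notin> U" "U = insert j T" "S = insert i U"
    by auto
  moreover have "finite T"
    using \<open>T \<subseteq> {1..n}\<close> finite_subset by blast
  ultimately show ?thesis
    by simp
qed

lemma ann_ann_neq_zeroD:
  assumes "fmult n (ann n i) (ann n j) S T \<noteq> 0"
  shows "S \<subseteq> {1..n} \<and> T \<subseteq> {1..n} \<and> card T = card S + 2"
proof -
  from assms obtain U where "ann n i S U \<noteq> 0" and "ann n j U T \<noteq> 0"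
    unfolding fmult_def by (rule sum.not_neutral_contains_not_neutral) auto
  from ann_neq_zeroD[OF this(1)] ann_neq_zeroD[OF this(2)]
  have "S \<subseteq> {1..n}" "i \<in> {1..n}" "j \<in> {1..n}" "i \<notin> S" "j \<notin> U" "U = insert i S" "T = insert j U"
    by auto
  moreover have "finite S"
    using \<open>S \<subseteq> {1..n}\<close> finite_subset by blast
  ultimately show ?thesis
    by simp
qed

lemma fmult_numop_right:
  "fmult n A (numop n) S T = (if T \<subseteq> {1..n} then A S T * of_nat (card T) else 0)"
proof -
  have "fmult n A (numop n) S T
      = (\<Sum>U\<in>Pow {1..n}. if U = T then (if T \<subseteq> {1..n} then A S T * of_nat (card T) else 0) else 0)"
    unfolding fmult_def by (intro sum.cong refl) (auto simp: numop_entry)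
  then show ?thesis
    by simp
qed

lemma fmult_numop_left:
  "fmult n (numop n) A S T = (if S \<subseteq> {1..n} then of_nat (card S) * A S T else 0)"
proof -
  have "fmult n (numop n) A S T
      = (\<Sum>U\<in>Pow {1..n}. if U = S then (if S \<subseteq> {1..n} then of_nat (card S) * A S T else 0) else 0)"
    unfolding fmult_def by (intro sum.cong refl) (auto simp: numop_entry)
  then show ?thesis
    by (simp add: sum.delta')
qed

section \<open>The Hilbert--Schmidt inner product\<close>

definition frob_inner :: "nat \<Rightarrow> fop \<Rightarrow> fop \<Rightarrow> complex" where
  "frob_inner n A B = (\<Sum>S\<in>Pow {1..n}. \<Sum>T\<in>Pow {1..n}. cnj (A S T) * B S T)"

lemma hs_inner_eq_frob_inner: "hs_inner n A B = frob_inner n A B"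
  unfolding hs_inner_def ftr_def fmult_def fadj_def frob_inner_def by (rule sum.swap)

lemma frob_inner_add_left:
  "frob_inner n (\<lambda>S T. A S T + B S T) X = frob_inner n A X + frob_inner n B X"
  by (simp add: frob_inner_def sum.distrib distrib_right)

lemma frob_inner_scale_left:
  "frob_inner n (\<lambda>S T. c * A S T) X = cnj c * frob_inner n A X"
  by (simp add: frob_inner_def sum_distrib_left mult.assoc)

lemma frob_inner_sum_left:
  "frob_inner n (\<lambda>S T. \<Sum>i\<in>I. A i S T) X = (\<Sum>i\<in>I. frob_inner n (A i) X)"
  by (simp add: frob_inner_def sum_distrib_right sum.swap[of _ I])

lemma frob_inner_add_right:
  "frob_inner n X (\<lambda>S T. A S T + B S T) = frob_inner n X A + frob_inner n X B"
  by (simp add: frob_inner_def sum.distrib distrib_left)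

lemma frob_inner_diff_right:
  "frob_inner n X (\<lambda>S T. A S T - B S T) = frob_inner n X A - frob_inner n X B"
  by (simp add: frob_inner_def sum_subtractf right_diff_distrib)

lemma frob_inner_scale_right:
  "frob_inner n X (\<lambda>S T. c * A S T) = c * frob_inner n X A"
  by (simp add: frob_inner_def sum_distrib_left mult.left_commute)

lemma frob_inner_divide_right:
  "frob_inner n X (\<lambda>S T. A S T / c) = frob_inner n X A / c"
  by (simp add: frob_inner_def sum_divide_distrib)

lemma frob_inner_sum_right:
  "frob_inner n X (\<lambda>S T. \<Sum>i\<in>I. A i S T) = (\<Sum>i\<in>I. frob_inner n X (A i))"
  by (simp add: frob_inner_def sum_distrib_left sum.swap[of _ I])

lemma frob_inner_commute_real:
  assumes "\<And>S T. cnj (A S T) = A S T" and "\<And>S T. cnj (B S T) = B S T"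
  shows "frob_inner n A B = frob_inner n B A"
  unfolding frob_inner_def assms by (simp add: mult.commute)

lemma frob_inner_diagonal_left:
  assumes "\<And>S T. S \<noteq> T \<Longrightarrow> D S T = 0"
  shows "frob_inner n D B = (\<Sum>S\<in>Pow {1..n}. cnj (D S S) * B S S)"
  unfolding frob_inner_def
proof (rule sum.cong)
  fix S assume "S \<in> Pow {1..n}"
  have "(\<Sum>T\<in>Pow {1..n}. cnj (D S T) * B S T)
      = (\<Sum>T\<in>Pow {1..n}. if T = S then cnj (D S S) * B S S else 0)"
    by (rule sum.cong) (auto simp: assms)
  with \<open>S \<in> Pow {1..n}\<close> show "(\<Sum>T\<in>Pow {1..n}. cnj (D S T) * B S T) = cnj (D S S) * B S S"
    by simp
qed simp

lemma frob_inner_fid_left: "frob_inner n (fid n) B = ftr n B"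
  by (subst frob_inner_diagonal_left) (auto simp: fid_def ftr_def intro!: sum.cong)

lemma frob_self_eq_0D:
  assumes "frob_inner n D D = 0" and "S \<subseteq> {1..n}" and "T \<subseteq> {1..n}"
  shows "D S T = 0"
proof -
  have "complex_of_real (\<Sum>S\<in>Pow {1..n}. \<Sum>T\<in>Pow {1..n}. (cmod (D S T))\<^sup>2) = frob_inner n D D"
    unfolding frob_inner_def of_real_sum complex_norm_square by (simp add: mult.commute)
  then have "(\<Sum>S\<in>Pow {1..n}. \<Sum>T\<in>Pow {1..n}. (cmod (D S T))\<^sup>2) = 0"
    by (simp only: assms(1) of_real_eq_0_iff)
  then have "\<forall>S\<in>Pow {1..n}. \<forall>T\<in>Pow {1..n}. (cmod (D S T))\<^sup>2 = 0"
    by (simp add: sum_nonneg_eq_0_iff sum_nonneg)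
  then show ?thesis
    using assms(2,3) by simp
qed

lemma ftr_fmult_cre_ann: "ftr n (fmult n A (cre_ann n j i)) = frob_inner n (cre_ann n i j) A"
  unfolding ftr_def frob_inner_def fmult_def[of n A]
  by (intro sum.cong refl) (simp add: cre_ann_swap mult.commute)

lemma ftr_cre_ann:
  "ftr n (cre_ann n k l) = (if k = l then of_nat (card {S \<in> Pow {1..n}. k \<in> S}) else 0)"
  by (simp add: ftr_def cre_ann_diag sum.If_cases Int_def conj_commute)

lemma cnj_fid [simp]: "cnj (fid n S T) = fid n S T"
  by (simp add: fid_def)

lemma frob_inner_cre_ann_fid: "frob_inner n (cre_ann n i j) (fid n) = ftr n (cre_ann n i j)"
  by (subst frob_inner_commute_real) (simp_all add: frob_inner_fid_left)

lemma cre_ann_same_offdiag: "S \<noteq> T \<Longrightarrow> cre_ann n i i S T = 0"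
  by (blast dest: cre_ann_neq_zeroD)

lemma frob_inner_cre_ann_same:
  "frob_inner n (cre_ann n i i) (cre_ann n k l)
     = (if k = l then of_nat (card {S \<in> Pow {1..n}. i \<in> S \<and> k \<in> S}) else 0)"
proof -
  have "frob_inner n (cre_ann n i i) (cre_ann n k l)
      = (\<Sum>S\<in>Pow {1..n}. if k = l \<and> i \<in> S \<and> k \<in> S then 1 else 0)"
    by (subst frob_inner_diagonal_left) (auto simp: cre_ann_same_offdiag cre_ann_diag intro!: sum.cong)
  then show ?thesis
    by (simp add: sum.If_cases Int_def conj_commute)
qed

lemma cre_ann_neq_zero_unique:
  assumes "i \<noteq> j" and "cre_ann n i j S T \<noteq> 0" and "cre_ann n k l S T \<noteq> 0"
  shows "k = i \<and> l = j"
proof -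
  from cre_ann_neq_zeroD[OF assms(2)] have "i \<in> S" "j \<in> T" "S - {i} = T - {j}"
    by auto
  moreover from cre_ann_neq_zeroD[OF assms(3)] have "k \<in> S" "l \<in> T" "S - {k} = T - {l}"
    by auto
  ultimately show ?thesis
    using assms(1) by blast
qed

lemma cre_ann_square: "cre_ann n i j S T * cre_ann n i j S T = (if cre_ann n i j S T = 0 then 0 else 1)"
  by (auto simp: cre_ann_entry simp flip: power_add simp: power_mult[symmetric] mult_2[symmetric])

lemma frob_inner_cre_ann_distinct:
  assumes "i \<in> {1..n}" and "j \<in> {1..n}" and "i \<noteq> j"
  shows "frob_inner n (cre_ann n i j) (cre_ann n k l)
     = (if k = i \<and> l = j then of_nat (card {S \<in> Pow {1..n}. i \<in> S \<and> j \<notin> S}) else 0)"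
proof (cases "k = i \<and> l = j")
  case True
  have "frob_inner n (cre_ann n i j) (cre_ann n i j)
      = (\<Sum>S\<in>Pow {1..n}. \<Sum>T\<in>Pow {1..n}.
           if T = insert j (S - {i}) then (if i \<in> S \<and> j \<notin> S then 1 else 0) else 0)"
    unfolding frob_inner_def cnj_cre_ann cre_ann_square
    using assms by (intro sum.cong refl) (auto simp: cre_ann_entry)
  also have "\<dots> = (\<Sum>S\<in>Pow {1..n}. if i \<in> S \<and> j \<notin> S then 1 else 0)"
    using assms(2) by (intro sum.cong refl) (auto simp: sum.delta')
  finally show ?thesis
    using True by (simp add: sum.If_cases Int_def conj_commute)
next
  case False
  then have product_zero: "cre_ann n i j S T * cre_ann n k l S T = 0" for S T
    using cre_ann_neq_zero_unique[OF assms(3)] by fastforce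
  show ?thesis
    unfolding if_not_P[OF False] frob_inner_def cnj_cre_ann product_zero by simp
qed

section \<open>One-body operators and the orthogonal projection\<close>

definition number_conserving :: "fop \<Rightarrow> bool" where
  "number_conserving A \<longleftrightarrow> (\<forall>S T. A S T \<noteq> 0 \<longrightarrow> card S = card T)"

lemma frob_inner_eq_0_if_number_conserving:
  assumes "\<And>S T. A S T \<noteq> 0 \<Longrightarrow> card S \<noteq> card T" and "number_conserving X"
  shows "frob_inner n A X = 0"
proof -
  have zero: "cnj (A S T) * X S T = 0" for S T
    using assms unfolding number_conserving_def by fastforce
  show ?thesis
    unfolding frob_inner_def zero by simp
qed

lemma number_conserving_if_commutes_numop:
  assumes "fock_op n A" and "fmult n A (numop n) = fmult n (numop n) A"
  shows "number_conserving A"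
  unfolding number_conserving_def
proof (intro allI impI)
  fix S T assume nonzero: "A S T \<noteq> 0"
  with assms(1) have "S \<subseteq> {1..n}" and "T \<subseteq> {1..n}"
    unfolding fock_op_def by blast+
  with fun_cong[OF fun_cong[OF assms(2)], of S T] have "A S T * of_nat (card T) = of_nat (card S) * A S T"
    by (simp add: fmult_numop_right fmult_numop_left)
  with nonzero show "card S = card T"
    by simp
qed

definition one_body_op ::
  "nat \<Rightarrow> complex \<Rightarrow> (nat \<Rightarrow> nat \<Rightarrow> complex) \<Rightarrow> (nat \<Rightarrow> nat \<Rightarrow> complex) \<Rightarrow> (nat \<Rightarrow> nat \<Rightarrow> complex) \<Rightarrow> fop"
  where
  "one_body_op n a b d e = (\<lambda>S T. a * fid n S T
     + (\<Sum>i\<in>{1..n}. \<Sum>j\<in>{1..n}. b i j * cre_ann n i j S T)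
     + (\<Sum>i\<in>{1..n}. \<Sum>j\<in>{1..n}. d i j * fmult n (cre n i) (cre n j) S T)
     + (\<Sum>i\<in>{1..n}. \<Sum>j\<in>{1..n}. e i j * fmult n (ann n i) (ann n j) S T))"

lemma mem_O1_iff: "x \<in> O1 n \<longleftrightarrow> (\<exists>a b d e. x = one_body_op n a b d e)"
  by (simp add: O1_def one_body_op_def)

lemma one_body_op_diff:
  "(\<lambda>S T. one_body_op n a b d e S T - one_body_op n a' b' d' e' S T)
     = one_body_op n (a - a') (\<lambda>i j. b i j - b' i j) (\<lambda>i j. d i j - d' i j) (\<lambda>i j. e i j - e' i j)"
  by (simp add: one_body_op_def left_diff_distrib sum_subtractf algebra_simps)

lemma O1_diff:
  assumes "u \<in> O1 n" and "v \<in> O1 n"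
  shows "(\<lambda>S T. u S T - v S T) \<in> O1 n"
proof -
  from assms obtain a b d e a' b' d' e'
    where u: "u = one_body_op n a b d e" and v: "v = one_body_op n a' b' d' e'"
    unfolding mem_O1_iff by blast
  show ?thesis
    unfolding mem_O1_iff u v one_body_op_diff by blast
qed

lemma fock_op_O1:
  assumes "u \<in> O1 n"
  shows "fock_op n u"
proof -
  from assms obtain a b d e where u: "u = one_body_op n a b d e"
    unfolding mem_O1_iff by blast
  have "u S T = 0" if outside: "\<not> (S \<subseteq> {1..n} \<and> T \<subseteq> {1..n})" for S T
  proof -
    have "fid n S T = 0"
      using outside by (auto simp: fid_def)
    moreover have "cre_ann n i j S T = 0" for i j
      using outside cre_ann_neq_zeroD by blast
    moreover have "fmult n (cre n i) (cre n j) S T = 0" for i j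
      using outside cre_cre_neq_zeroD by blast
    moreover have "fmult n (ann n i) (ann n j) S T = 0" for i j
      using outside ann_ann_neq_zeroD by blast
    ultimately show ?thesis
      by (simp add: u one_body_op_def)
  qed
  then show ?thesis
    unfolding fock_op_def by blast
qed

lemma frob_inner_one_body_op:
  "frob_inner n (one_body_op n a b d e) X
     = cnj a * frob_inner n (fid n) X
       + (\<Sum>i\<in>{1..n}. \<Sum>j\<in>{1..n}. cnj (b i j) * frob_inner n (cre_ann n i j) X)
       + (\<Sum>i\<in>{1..n}. \<Sum>j\<in>{1..n}. cnj (d i j) * frob_inner n (fmult n (cre n i) (cre n j)) X)
       + (\<Sum>i\<in>{1..n}. \<Sum>j\<in>{1..n}. cnj (e i j) * frob_inner n (fmult n (ann n i) (ann n j)) X)"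
  unfolding one_body_op_def
  by (simp only: frob_inner_add_left frob_inner_scale_left frob_inner_sum_left)

lemma O1_orthogonalI:
  assumes "number_conserving X" and "frob_inner n (fid n) X = 0"
    and "\<And>i j. i \<in> {1..n} \<Longrightarrow> j \<in> {1..n} \<Longrightarrow> frob_inner n (cre_ann n i j) X = 0"
    and "y \<in> O1 n"
  shows "hs_inner n y X = 0"
proof -
  from assms(4) obtain a b d e where y: "y = one_body_op n a b d e"
    unfolding mem_O1_iff by blast
  have cre_cre: "frob_inner n (fmult n (cre n i) (cre n j)) X = 0" for i j
    by (rule frob_inner_eq_0_if_number_conserving[OF _ assms(1)]) (auto dest: cre_cre_neq_zeroD)
  have ann_ann: "frob_inner n (fmult n (ann n i) (ann n j)) X = 0" for i j
    by (rule frob_inner_eq_0_if_number_conserving[OF _ assms(1)]) (auto dest: ann_ann_neq_zeroD)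
  show ?thesis
    using assms(3)
    unfolding hs_inner_eq_frob_inner y frob_inner_one_body_op assms(2) cre_cre ann_ann by simp
qed

lemma orth_proj_eqI:
  assumes "P \<in> V"
    and orth: "\<And>y. y \<in> V \<Longrightarrow> hs_inner n y (\<lambda>S T. x S T - P S T) = 0"
    and diff: "\<And>u v. u \<in> V \<Longrightarrow> v \<in> V \<Longrightarrow> (\<lambda>S T. u S T - v S T) \<in> V"
    and fock: "\<And>u. u \<in> V \<Longrightarrow> fock_op n u"
  shows "orth_proj n V x = P"
  unfolding orth_proj_def
proof (rule the_equality)
  show "P \<in> V \<and> (\<forall>y\<in>V. hs_inner n y (\<lambda>S T. x S T - P S T) = 0)"
    using assms(1) orth by blast
next
  fix p assume p: "p \<in> V \<and> (\<forall>y\<in>V. hs_inner n y (\<lambda>S T. x S T - p S T) = 0)"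
  define D where "D = (\<lambda>S T. p S T - P S T)"
  have "D \<in> V"
    unfolding D_def using p assms(1) by (intro diff) simp_all
  have "frob_inner n D (\<lambda>S T. x S T - P S T) = 0"
    using orth[OF \<open>D \<in> V\<close>] by (simp only: hs_inner_eq_frob_inner)
  moreover have "frob_inner n D (\<lambda>S T. x S T - p S T) = 0"
    using p \<open>D \<in> V\<close> by (simp only: hs_inner_eq_frob_inner)
  ultimately have "frob_inner n D (\<lambda>S T. (x S T - P S T) - (x S T - p S T)) = 0"
    unfolding frob_inner_diff_right by simp
  moreover have "(\<lambda>S T. (x S T - P S T) - (x S T - p S T)) = D"
    by (simp add: D_def fun_eq_iff)
  ultimately have "frob_inner n D D = 0"
    by simp
  have "D S T = 0" for S T
  proof (cases "S \<subseteq> {1..n} \<and> T \<subseteq> {1..n}")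
    case True
    then show ?thesis
      using frob_self_eq_0D[OF \<open>frob_inner n D D = 0\<close>] by blast
  next
    case False
    then show ?thesis
      using fock[OF \<open>D \<in> V\<close>] unfolding fock_op_def by blast
  qed
  then show "p = P"
    unfolding D_def by (simp add: fun_eq_iff)
qed

lemma orth_proj_O1_eqI:
  assumes "P \<in> O1 n" and "number_conserving x" and "number_conserving P"
    and "frob_inner n (fid n) P = frob_inner n (fid n) x"
    and "\<And>i j. i \<in> {1..n} \<Longrightarrow> j \<in> {1..n} \<Longrightarrow>
      frob_inner n (cre_ann n i j) P = frob_inner n (cre_ann n i j) x"
  shows "orth_proj n (O1 n) x = P"
proof (rule orth_proj_eqI[OF assms(1) _ O1_diff fock_op_O1])
  have "x S T \<noteq> 0 \<or> P S T \<noteq> 0" if "x S T - P S T \<noteq> 0" for S T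
    using that by auto
  then have "number_conserving (\<lambda>S T. x S T - P S T)"
    using assms(2,3) unfolding number_conserving_def by blast
  moreover have "frob_inner n (fid n) (\<lambda>S T. x S T - P S T) = 0"
    using assms(4) by (simp add: frob_inner_diff_right)
  moreover have "frob_inner n (cre_ann n i j) (\<lambda>S T. x S T - P S T) = 0"
    if "i \<in> {1..n}" and "j \<in> {1..n}" for i j
    using assms(5)[OF that] by (simp add: frob_inner_diff_right)
  ultimately show "hs_inner n y (\<lambda>S T. x S T - P S T) = 0" if "y \<in> O1 n" for y
    using O1_orthogonalI that by blast
qed

section \<open>The projection of a number-conserving state\<close>

definition one_body_formula :: "nat \<Rightarrow> (nat \<Rightarrow> nat \<Rightarrow> complex) \<Rightarrow> fop" where
  "one_body_formula n \<gamma> = (\<lambda>S T. (of_nat n + 1 - 2 * (\<Sum>i\<in>{1..n}. \<gamma> i i)) * fid n S T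
     - 2 * numop n S T + 4 * (\<Sum>i\<in>{1..n}. \<Sum>j\<in>{1..n}. \<gamma> i j * cre_ann n i j S T))"

lemma frob_inner_one_body_formula:
  "frob_inner n A (one_body_formula n \<gamma>)
     = (of_nat n + 1 - 2 * (\<Sum>i\<in>{1..n}. \<gamma> i i)) * frob_inner n A (fid n)
       - 2 * (\<Sum>k\<in>{1..n}. frob_inner n A (cre_ann n k k))
       + 4 * (\<Sum>k\<in>{1..n}. \<Sum>l\<in>{1..n}. \<gamma> k l * frob_inner n A (cre_ann n k l))"
  unfolding one_body_formula_def numop_def
  by (simp only: frob_inner_add_right frob_inner_diff_right frob_inner_scale_right frob_inner_sum_right)

lemma number_conserving_one_body_formula: "number_conserving (one_body_formula n \<gamma>)"
  unfolding number_conserving_def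
proof (intro allI impI)
  fix S T assume nonzero: "one_body_formula n \<gamma> S T \<noteq> 0"
  show "card S = card T"
  proof (rule ccontr)
    assume "card S \<noteq> card T"
    then have "S \<noteq> T" and "cre_ann n i j S T = 0" for i j
      using cre_ann_card by blast+
    then have "one_body_formula n \<gamma> S T = 0"
      by (simp add: one_body_formula_def fid_def numop_entry)
    with nonzero show False ..
  qed
qed

lemma one_body_formula_divide_mem_O1: "(\<lambda>S T. one_body_formula n \<gamma> S T / c) \<in> O1 n"
proof -
  \<comment> \<open>The number operator is absorbed into the diagonal coefficients.\<close>
  define b where "b = (\<lambda>i j. (4 * \<gamma> i j - (if i = j then 2 else 0)) / c)"
  have b_sum: "(\<Sum>i\<in>{1..n}. \<Sum>j\<in>{1..n}. b i j * cre_ann n i j S T)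
      = (4 * (\<Sum>i\<in>{1..n}. \<Sum>j\<in>{1..n}. \<gamma> i j * cre_ann n i j S T) - 2 * numop n S T) / c" for S T
    by (simp add: b_def numop_def sum_subtractf sum_distrib_left sum_divide_distrib[symmetric]
        algebra_simps if_distrib[of "\<lambda>x. x * _"] cong: if_cong)
  have "one_body_formula n \<gamma> S T / c
      = (of_nat n + 1 - 2 * (\<Sum>i\<in>{1..n}. \<gamma> i i)) / c * fid n S T
        + (4 * (\<Sum>i\<in>{1..n}. \<Sum>j\<in>{1..n}. \<gamma> i j * cre_ann n i j S T) - 2 * numop n S T) / c" for S T
    by (simp add: one_body_formula_def divide_inverse algebra_simps)
  then have "(\<lambda>S T. one_body_formula n \<gamma> S T / c)
      = one_body_op n ((of_nat n + 1 - 2 * (\<Sum>i\<in>{1..n}. \<gamma> i i)) / c) b (\<lambda>_ _. 0) (\<lambda>_ _. 0)"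
    unfolding one_body_op_def b_sum by (simp add: fun_eq_iff)
  then show ?thesis
    unfolding mem_O1_iff by blast
qed

lemma frob_inner_fid_one_body_formula: "frob_inner n (fid n) (one_body_formula n \<gamma>) = 2 ^ n"
proof -
  have ftr_fid: "ftr n (fid n) = 2 ^ n"
    by (simp add: ftr_def fid_def card_Pow)
  have "frob_inner n (fid n) (one_body_formula n \<gamma>)
      = (of_nat n + 1 - 2 * (\<Sum>i\<in>{1..n}. \<gamma> i i)) * 2 ^ n
        - 2 * (\<Sum>k\<in>{1..n}. of_nat (card {S \<in> Pow {1..n}. k \<in> S}))
        + 4 * (\<Sum>k\<in>{1..n}. \<gamma> k k * of_nat (card {S \<in> Pow {1..n}. k \<in> S}))"
    unfolding frob_inner_one_body_formula frob_inner_fid_left ftr_fid ftr_cre_ann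
    by (simp only: sum_sum_if_eq finite_atLeastAtMost if_P[OF refl])
  also have "\<dots> = 2 ^ n"
    using sum_mult_card_Pow_member[of "\<lambda>_. 1" n] sum_mult_card_Pow_member[of "\<lambda>k. \<gamma> k k" n]
    by (simp add: field_simps)
  finally show ?thesis .
qed

lemma frob_inner_cre_ann_same_one_body_formula:
  assumes "i \<in> {1..n}"
  shows "frob_inner n (cre_ann n i i) (one_body_formula n \<gamma>) = 2 ^ n * \<gamma> i i"
proof -
  have "frob_inner n (cre_ann n i i) (one_body_formula n \<gamma>)
      = (of_nat n + 1 - 2 * (\<Sum>k\<in>{1..n}. \<gamma> k k)) * of_nat (card {S \<in> Pow {1..n}. i \<in> S})
        - 2 * (\<Sum>k\<in>{1..n}. 1 * of_nat (card {S \<in> Pow {1..n}. i \<in> S \<and> k \<in> S}))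
        + 4 * (\<Sum>k\<in>{1..n}. \<gamma> k k * of_nat (card {S \<in> Pow {1..n}. i \<in> S \<and> k \<in> S}))"
    unfolding frob_inner_one_body_formula frob_inner_cre_ann_fid ftr_cre_ann frob_inner_cre_ann_same
    by (simp only: sum_sum_if_eq finite_atLeastAtMost if_P[OF refl] mult_1)
  also have "\<dots> = 2 ^ n * \<gamma> i i"
    unfolding sum_mult_card_Pow_two_members[OF assms] of_nat_card_Pow_member[OF assms]
    by (simp add: field_simps)
  finally show ?thesis .
qed

lemma frob_inner_cre_ann_distinct_one_body_formula:
  assumes "i \<in> {1..n}" and "j \<in> {1..n}" and "i \<noteq> j"
  shows "frob_inner n (cre_ann n i j) (one_body_formula n \<gamma>) = 2 ^ n * \<gamma> i j"
proof -
  define q where "q = (of_nat (card {S \<in> Pow {1..n}. i \<in> S \<and> j \<notin> S}) :: complex)"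
  have not_both: "(k = i \<and> k = j) = False" for k
    using assms(3) by blast
  have "frob_inner n (cre_ann n i j) (one_body_formula n \<gamma>)
      = 4 * (\<Sum>k\<in>{1..n}. \<Sum>l\<in>{1..n}. \<gamma> k l * (if k = i \<and> l = j then q else 0))"
    unfolding frob_inner_one_body_formula frob_inner_cre_ann_fid ftr_cre_ann
      frob_inner_cre_ann_distinct[OF assms] q_def[symmetric]
    using assms(3) by (simp add: not_both)
  also have "\<dots> = 4 * \<gamma> i j * q"
    using assms(1,2) by (simp add: sum_sum_if_eq_pair)
  also have "\<dots> = 2 ^ n * \<gamma> i j"
    using arg_cong[OF card_Pow_member_nonmember[OF assms], of "of_nat :: nat \<Rightarrow> complex"]
    by (simp add: q_def)
  finally show ?thesis .
qed

lemma frob_inner_cre_ann_one_body_formula: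
  assumes "i \<in> {1..n}" and "j \<in> {1..n}"
  shows "frob_inner n (cre_ann n i j) (one_body_formula n \<gamma>) = 2 ^ n * \<gamma> i j"
  using assms frob_inner_cre_ann_same_one_body_formula frob_inner_cre_ann_distinct_one_body_formula
  by (cases "i = j") simp_all

theorem corollary1p2:
  fixes n :: nat and \<rho> :: fop
  assumes "density_matrix n \<rho>"
    and "fmult n \<rho> (numop n) = fmult n (numop n) \<rho>"
  shows "(let \<gamma> = (\<lambda>i j. ftr n (fmult n \<rho> (fmult n (cre n j) (ann n i))));
              trg = (\<Sum>i\<in>{1..n}. \<gamma> i i)
          in (\<lambda>S T. 2 ^ n * orth_proj n (O1 n) \<rho> S T)
           = (\<lambda>S T. (of_nat n + 1 - 2 * trg) * fid n S T - 2 * numop n S T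
               + 4 * (\<Sum>i\<in>{1..n}. \<Sum>j\<in>{1..n}. \<gamma> i j * fmult n (cre n i) (ann n j) S T)))"
proof -
  define \<gamma> where "\<gamma> = (\<lambda>i j. ftr n (fmult n \<rho> (cre_ann n j i)))"
  define P where "P = (\<lambda>S T. one_body_formula n \<gamma> S T / 2 ^ n)"
  have "orth_proj n (O1 n) \<rho> = P"
  proof (rule orth_proj_O1_eqI)
    show "P \<in> O1 n"
      unfolding P_def by (rule one_body_formula_divide_mem_O1)
    show "number_conserving \<rho>"
      by (rule number_conserving_if_commutes_numop[OF _ assms(2)])
        (use assms(1) in \<open>simp add: density_matrix_def\<close>)
    show "number_conserving P"
      using number_conserving_one_body_formula[of n \<gamma>] by (simp add: number_conserving_def P_def)
    show "frob_inner n (fid n) P = frob_inner n (fid n) \<rho>"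
      using assms(1) by (simp add: P_def frob_inner_divide_right frob_inner_fid_one_body_formula
          frob_inner_fid_left[of n \<rho>] density_matrix_def)
    show "frob_inner n (cre_ann n i j) P = frob_inner n (cre_ann n i j) \<rho>"
      if "i \<in> {1..n}" and "j \<in> {1..n}" for i j
      using that by (simp add: P_def frob_inner_divide_right frob_inner_cre_ann_one_body_formula
          \<gamma>_def ftr_fmult_cre_ann)
  qed
  then show ?thesis
    by (simp add: Let_def P_def \<gamma>_def one_body_formula_def)
qed

end
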